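(* Let $\Phi\subseteq\mathbb{R}$ be a feasible set, let $\omega$ be a random element (a random sample path) on a probability space, and let $J:\Phi\times\Omega\to\mathbb{R}$ be a performance function. Suppose that for every $\omega$ the function $u\mapsto J(u,\omega)$ has a minimizer $u^\omega=\arg\min_{u\in\Phi}J(u,\omega)$ (the $\omega$-solution, a real random variable) and is scalar unimodal in $u$, i.e. $J(u',\omega)\le J(u'',\omega)$ whenever $u''<u'<u^\omega$, and $J(u',\omega)\le J(u'',\omega)$ whenever $u^\omega<u'<u''$ ($u',u''\in\Phi$). Let $u^m\in\Phi$ be an $\omega$-median, i.e. $\Pr[u^\omega\le u^m]\ge 0.5$ and $\Pr[u^\omega\ge u^m]\ge 0.5$. Then $u^m$ is a champion solution, i.e. $\Pr[J(u^m,\omega)\le J(u,\omega)]\ge 0.5$ for every $u\in\Phi$.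
   Context: A champion solution of the stochastic problem $\min_{u\in\Phi}J(u,\omega)$ is a $u^c\in\Phi$ with $\Pr[J(u^c,\omega)\le J(u,\omega)]\ge 0.5$ for all $u\in\Phi$. The $\omega$-solution $u^\omega$ is the optimal solution of the deterministic problem $\min_{u\in\Phi}J(u,\omega)$ for a fixed sample path $\omega$; the $\omega$-median is a median of the distribution of $u^\omega$. All events considered are assumed measurable. *)

theory Defs
  imports "HOL-Probability.Probability"
begin

end

theory Submission
  imports Defs
begin

text \<open>If \<open>u < u\<^sup>m\<close>, then on every sample path with \<open>u\<^sup>\<omega> \<ge> u\<^sup>m\<close> the point \<open>u\<^sup>m\<close> lies between \<open>u\<close>
  and the minimiser, so unimodality gives \<open>J(u\<^sup>m,\<omega>) \<le> J(u,\<omega>)\<close>; by the median property that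
  event has probability at least 1/2. The case \<open>u > u\<^sup>m\<close> is symmetric.\<close>

lemma unimodal_le_left_of_minimizer:
  fixes f :: "'a::linorder \<Rightarrow> 'b::order"
  assumes "\<And>x. x \<in> S \<Longrightarrow> f x0 \<le> f x"
    and "\<And>x' x''. x' \<in> S \<Longrightarrow> x'' \<in> S \<Longrightarrow> x'' < x' \<Longrightarrow> x' < x0 \<Longrightarrow> f x' \<le> f x''"
    and "x \<in> S" "y \<in> S" "y < x" "x \<le> x0"
  shows "f x \<le> f y"
proof (cases "x = x0")
  case True
  then show ?thesis using assms(1,4) by simp
next
  case False
  then show ?thesis using assms(2-6) by simp
qed

lemma unimodal_le_right_of_minimizer:
  fixes f :: "'a::linorder \<Rightarrow> 'b::order"
  assumes "\<And>x. x \<in> S \<Longrightarrow> f x0 \<le> f x"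
    and "\<And>x' x''. x' \<in> S \<Longrightarrow> x'' \<in> S \<Longrightarrow> x0 < x' \<Longrightarrow> x' < x'' \<Longrightarrow> f x' \<le> f x''"
    and "x \<in> S" "y \<in> S" "x < y" "x0 \<le> x"
  shows "f x \<le> f y"
proof (cases "x = x0")
  case True
  then show ?thesis using assms(1,4) by simp
next
  case False
  then show ?thesis using assms(2-6) by simp
qed

lemma (in prob_space) prob_ge_of_subset:
  assumes "A \<subseteq> B" "B \<in> events" "c \<le> prob A"
  shows "c \<le> prob B"
  using assms finite_measure_mono order_trans by blast

theorem theorem1:
  fixes M :: "'w measure" and Phi :: "real set"
    and J :: "real \<Rightarrow> 'w \<Rightarrow> real" and uo :: "'w \<Rightarrow> real" and um :: real
  assumes prob: "prob_space M"
    and uo_rv: "uo \<in> borel_measurable M"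
    and uo_in: "\<And>w. w \<in> space M \<Longrightarrow> uo w \<in> Phi"
    and uo_min: "\<And>w u. w \<in> space M \<Longrightarrow> u \<in> Phi \<Longrightarrow> J (uo w) w \<le> J u w"
    and unimod_left: "\<And>w u' u''. w \<in> space M \<Longrightarrow> u' \<in> Phi \<Longrightarrow> u'' \<in> Phi \<Longrightarrow>
                         u'' < u' \<Longrightarrow> u' < uo w \<Longrightarrow> J u' w \<le> J u'' w"
    and unimod_right: "\<And>w u' u''. w \<in> space M \<Longrightarrow> u' \<in> Phi \<Longrightarrow> u'' \<in> Phi \<Longrightarrow>
                         uo w < u' \<Longrightarrow> u' < u'' \<Longrightarrow> J u' w \<le> J u'' w"
    and um_in: "um \<in> Phi"
    and med_le: "measure M {w \<in> space M. uo w \<le> um} \<ge> 1/2"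
    and med_ge: "measure M {w \<in> space M. uo w \<ge> um} \<ge> 1/2"
    and events_meas: "\<And>u. u \<in> Phi \<Longrightarrow> {w \<in> space M. J um w \<le> J u w} \<in> sets M"
  shows "\<forall>u\<in>Phi. measure M {w \<in> space M. J um w \<le> J u w} \<ge> 1/2"
proof
  fix u assume u: "u \<in> Phi"
  interpret prob_space M by (rule prob)
  consider "u < um" | "u = um" | "um < u" by linarith
  then show "measure M {w \<in> space M. J um w \<le> J u w} \<ge> 1/2"
  proof cases
    case 1
    have "J um w \<le> J u w" if w: "w \<in> space M" and "um \<le> uo w" for w
      using uo_min[OF w] unimod_left[OF w] um_in u 1 \<open>um \<le> uo w\<close>
      by (rule unimodal_le_left_of_minimizer)
    then have "{w \<in> space M. uo w \<ge> um} \<subseteq> {w \<in> space M. J um w \<le> J u w}"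
      by blast
    then show ?thesis
      using events_meas[OF u] med_ge by (rule prob_ge_of_subset)
  next
    case 2
    then show ?thesis using prob_space by simp
  next
    case 3
    have "J um w \<le> J u w" if w: "w \<in> space M" and "uo w \<le> um" for w
      using uo_min[OF w] unimod_right[OF w] um_in u 3 \<open>uo w \<le> um\<close>
      by (rule unimodal_le_right_of_minimizer)
    then have "{w \<in> space M. uo w \<le> um} \<subseteq> {w \<in> space M. J um w \<le> J u w}"
      by blast
    then show ?thesis
      using events_meas[OF u] med_le by (rule prob_ge_of_subset)
  qed
qed

end
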